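(* Let $k$ be a field, $V$ a $k$-vector space, $\varphi\in\operatorname{End}_k(V)$ a finite potent endomorphism with index $i(\varphi)=r$ and AST-decomposition $V=W_\varphi\oplus U_\varphi$. Then an endomorphism $\psi\in\operatorname{End}_k(V)$ is a G-Drazin inverse of $\varphi$ if and only if $W_\varphi$ and $U_\varphi$ are invariant under $\psi$, $\psi|_{W_\varphi}=(\varphi|_{W_\varphi})^{-1}$, and $\psi|_{U_\varphi}$ is a generalized inverse of $\varphi|_{U_\varphi}$.
   Context: An endomorphism $\varphi$ of a $k$-vector space $V$ is finite potent if $\varphi^n(V)$ is finite dimensional for some $n$. For such $\varphi$, the AST-decomposition is $V=U_\varphi\oplus W_\varphi$ where $U_\varphi=\{v\in V: \varphi^m(v)=0 \text{ for some } m\}$ and $W_\varphi=\{v\in V: p(\varphi)(v)=0 \text{ for some } p(x)\in k[x] \text{ coprime to } x\}$; both are $\varphi$-invariant, $\varphi|_{U_\varphi}$ is nilpotent, $W_\varphi$ is finite dimensional and $\varphi|_{W_\varphi}$ is an automorphism. The index $i(\varphi)$ is the nilpotency order of $\varphi|_{U_\varphi}$. An endomorphism $\psi\in\operatorname{End}_k(V)$ is a G-Drazin inverse of $\varphi$ if $\varphi\circ\psi\circ\varphi=\varphi$ and $\psi\circ\varphi^{r}=\varphi^{r}\circ\psi$, where $r=i(\varphi)$. A generalized inverse of an endomorphism $g$ of a vector space $U$ is an endomorphism $g^-$ of $U$ with $g\circ g^-\circ g=g$. *)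

theory Defs
  imports Main "HOL-Computational_Algebra.Polynomial"
begin

text \<open>A k-vector space V is modelled by a type 'v with a scalar multiplication
  scale :: 'k \<Rightarrow> 'v \<Rightarrow> 'v satisfying the vector_space locale axioms;
  endomorphisms are the k-linear maps 'v \<Rightarrow> 'v.\<close>

definition finite_potent :: "('k::field \<Rightarrow> 'v::ab_group_add \<Rightarrow> 'v) \<Rightarrow> ('v \<Rightarrow> 'v) \<Rightarrow> bool" where
  "finite_potent scale \<phi> \<longleftrightarrow> Vector_Spaces.linear scale scale \<phi> \<and>
     (\<exists>n B. finite B \<and> module.span scale B = range (\<phi> ^^ n))"

definition poly_endo :: "('k::field \<Rightarrow> 'v::ab_group_add \<Rightarrow> 'v) \<Rightarrow> 'k poly \<Rightarrow> ('v \<Rightarrow> 'v) \<Rightarrow> 'v \<Rightarrow> 'v" where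
  "poly_endo scale p \<phi> v = (\<Sum>i\<le>degree p. scale (coeff p i) ((\<phi> ^^ i) v))"

definition U_part :: "('v::ab_group_add \<Rightarrow> 'v) \<Rightarrow> 'v set" where
  "U_part \<phi> = {v. \<exists>m. (\<phi> ^^ m) v = 0}"

definition W_part :: "('k::field \<Rightarrow> 'v::ab_group_add \<Rightarrow> 'v) \<Rightarrow> ('v \<Rightarrow> 'v) \<Rightarrow> 'v set" where
  "W_part scale \<phi> = {v. \<exists>p :: 'k poly. coprime p [:0, 1:] \<and> poly_endo scale p \<phi> v = 0}"

definition fp_index :: "('v::ab_group_add \<Rightarrow> 'v) \<Rightarrow> nat" where
  "fp_index \<phi> = (LEAST n. \<forall>v\<in>U_part \<phi>. (\<phi> ^^ n) v = 0)"

definition G_Drazin_inverse :: "('v::ab_group_add \<Rightarrow> 'v) \<Rightarrow> ('v \<Rightarrow> 'v) \<Rightarrow> bool" where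
  "G_Drazin_inverse \<phi> \<psi> \<longleftrightarrow> \<phi> \<circ> \<psi> \<circ> \<phi> = \<phi> \<and>
     \<psi> \<circ> (\<phi> ^^ fp_index \<phi>) = (\<phi> ^^ fp_index \<phi>) \<circ> \<psi>"

end

theory Submission
  imports Defs "HOL-Computational_Algebra.Polynomial_Factorial"
begin

(* Since phi^n(V) is finite dimensional, the decreasing chain of images phi^k(V) stabilises at
  some M, and phi maps the finite-dimensional space W = phi^M(V) onto itself, hence bijectively;
  this gives the Fitting decomposition V = ker phi^M + W. A vector killed by some power of phi has
  no W-component, so U_phi = ker phi^M. On ker phi^M an operator p(phi) with p(0) \<noteq> 0 is
  injective, so W_phi \<subseteq> W; conversely a nontrivial linear relation among w, phi w, ...,
  phi^d w for w in W can be divided by a power of phi, so W \<subseteq> W_phi. The power phi^r with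
  r = i(phi) again has kernel U_phi and image W_phi, so commuting with phi^r means preserving both
  parts, and on W_phi the identity phi psi phi = phi says that psi inverts phi. *)

lemma coprime_x_iff_coeff_0:
  fixes p :: "'k::field poly"
  shows "coprime p [:0, 1:] \<longleftrightarrow> coeff p 0 \<noteq> 0"
proof
  assume "coprime p [:0, 1:]"
  then show "coeff p 0 \<noteq> 0"
    using coprime_poly_0[of p "[:0, 1:]" 0] by (simp add: poly_0_coeff_0)
next
  assume "coeff p 0 \<noteq> 0"
  then have not_dvd: "\<not> [:0, 1:] dvd p"
    using poly_eq_0_iff_dvd[of p 0] by (simp add: poly_0_coeff_0)
  have prime: "prime_elem [:0, 1 :: 'k:]"
    by (rule prime_elem_linear_field_poly) simp
  show "coprime p [:0, 1:]"
  proof (rule coprimeI)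
    fix d assume "d dvd p" "d dvd [:0, 1:]"
    show "is_unit d"
    proof (rule ccontr)
      assume "\<not> is_unit d"
      with prime \<open>d dvd [:0, 1:]\<close> have "[:0, 1:] dvd d"
        by (rule prime_elemD2)
      with \<open>d dvd p\<close> not_dvd show False
        using dvd_trans by blast
    qed
  qed
qed

lemma range_funpow_Suc_subset: "range (f ^^ Suc n) \<subseteq> range (f ^^ n)" for f :: "'a \<Rightarrow> 'a"
  unfolding funpow_Suc_right image_comp[symmetric] by (intro image_mono subset_UNIV)

lemma funpow_commute_on:
  fixes f g :: "'a \<Rightarrow> 'a"
  assumes "f ` S \<subseteq> S" "\<And>x. x \<in> S \<Longrightarrow> g (f x) = f (g x)" "x \<in> S"
  shows "g ((f ^^ k) x) = (f ^^ k) (g x)"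
  using assms(3)
proof (induction k arbitrary: x)
  case (Suc k)
  have "g ((f ^^ Suc k) x) = g ((f ^^ k) (f x))"
    by (simp only: funpow_Suc_right comp_apply)
  also have "\<dots> = (f ^^ k) (g (f x))"
    using assms(1) Suc.prems by (intro Suc.IH) blast
  also have "\<dots> = (f ^^ Suc k) (g x)"
    using assms(2)[OF Suc.prems] by (simp only: funpow_Suc_right comp_apply)
  finally show ?case .
qed simp

context vector_space
begin

lemma card_le_dim_if_finite_span:
  assumes "finite B" "T \<subseteq> span B" "A \<subseteq> T" "independent A"
  shows "card A \<le> dim T"
proof -
  obtain D where D: "D \<subseteq> T" "independent D" "T \<subseteq> span D" "card D = dim T"
    using basis_exists by blast
  have "finite D"
    using independent_span_bound[OF assms(1) D(2)] D(1) assms(2) by blast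
  then show ?thesis
    using independent_span_bound[OF _ assms(4)] assms(3) D(3,4) by fastforce
qed

lemma subspace_eq_if_dim_le:
  assumes "finite B" "T \<subseteq> span B" "subspace S" "S \<subseteq> T" "dim T \<le> dim S"
  shows "S = T"
proof (rule ccontr)
  assume "S \<noteq> T"
  then obtain a where a: "a \<in> T" "a \<notin> S"
    using assms(4) by blast
  obtain C where C: "C \<subseteq> S" "independent C" "S \<subseteq> span C" "card C = dim S"
    using basis_exists by blast
  have "finite C"
    using independent_span_bound[OF assms(1) C(2)] C(1) assms(2,4) by blast
  have "a \<notin> span C"
    using span_minimal[OF C(1) assms(3)] a(2) by blast
  have "card (insert a C) \<le> dim T"
  proof (rule card_le_dim_if_finite_span[OF assms(1,2)])
    show "insert a C \<subseteq> T"
      using C(1) assms(4) a(1) by blast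
    show "independent (insert a C)"
      using independent_insertI[OF \<open>a \<notin> span C\<close> C(2)] .
  qed
  moreover have "a \<notin> C"
    using \<open>a \<notin> span C\<close> span_base by blast
  then have "card (insert a C) = Suc (dim S)"
    using \<open>finite C\<close> C(4) by simp
  ultimately show False
    using assms(5) by simp
qed

lemma decreasing_subspace_chain_stabilizes:
  assumes "finite B" "S 0 \<subseteq> span B" "\<And>k. subspace (S k)" "\<And>k. S (Suc k) \<subseteq> S k"
  shows "\<exists>k. S (Suc k) = S k"
proof (rule ccontr)
  assume unstable: "\<nexists>k. S (Suc k) = S k"
  have dim_decreasing: "dim (S (Suc k)) < dim (S k)" for k
  proof (rule ccontr)
    assume "\<not> dim (S (Suc k)) < dim (S k)"
    moreover have "S k \<subseteq> span B"
      using lift_Suc_antimono_le[of S 0 k, OF assms(4)] assms(2) by simp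
    ultimately have "S (Suc k) = S k"
      using subspace_eq_if_dim_le[OF assms(1) _ assms(3,4)] by simp
    with unstable show False
      by blast
  qed
  have "dim (S k) + k \<le> dim (S 0)" for k
  proof (induction k)
    case (Suc k)
    then show ?case
      using dim_decreasing[of k] by linarith
  qed simp
  from this[of "Suc (dim (S 0))"] show False
    by simp
qed

lemma independent_if_card_le_dim:
  assumes "finite S" "card S \<le> dim S"
  shows "independent S"
proof -
  obtain A where A: "A \<subseteq> S" "independent A" "S \<subseteq> span A"
    using maximal_independent_subset by blast
  then have "A = S"
    using card_seteq[OF assms(1) A(1)] basis_card_eq_dim assms(2) by simp
  then show ?thesis
    using A(2) by simp
qed

lemma inj_on_if_linear_image_eq:
  assumes "Vector_Spaces.linear scale scale f" "finite B" "W \<subseteq> span B" "subspace W"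
    and "f ` W = W"
  shows "inj_on f W"
proof -
  interpret f: Vector_Spaces.linear scale scale f by fact
  obtain C where C: "C \<subseteq> W" "independent C" "W \<subseteq> span C" "card C = dim W"
    using basis_exists by blast
  have "finite C"
    using independent_span_bound[OF assms(2) C(2)] C(1) assms(3) by blast
  have span_C: "span C = W"
    using C(3) span_minimal[OF C(1) assms(4)] by blast
  then have span_fC: "span (f ` C) = W"
    using f.span_image assms(5) by simp
  have "card C \<le> card (f ` C)"
    using dim_le_card[of W "f ` C"] span_fC \<open>finite C\<close> C(4) by simp
  then have "card (f ` C) = card C"
    using card_image_le[OF \<open>finite C\<close>, of f] by simp
  then have "inj_on f C" and "independent (f ` C)"
    using eq_card_imp_inj_on[OF \<open>finite C\<close>] independent_if_card_le_dim[of "f ` C"]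
      \<open>finite C\<close> span_fC C(4) dim_span[of "f ` C"] by simp_all
  then show ?thesis
    using f.inj_on_span_independent_image span_C by blast
qed

lemma nontrivial_relation_if_finite_span:
  assumes "finite B" "\<And>i. i \<le> card B \<Longrightarrow> v i \<in> span B"
  obtains c where "\<exists>i\<le>card B. c i \<noteq> 0" "(\<Sum>i\<le>card B. scale (c i) (v i)) = 0"
proof (cases "inj_on v {..card B}")
  case True
  have "dependent (v ` {..card B})"
  proof (rule ccontr)
    assume "independent (v ` {..card B})"
    then have "card (v ` {..card B}) \<le> card B"
      using independent_span_bound[OF assms(1)] assms(2) by blast
    then show False
      using card_image[OF True] by simp
  qed
  then obtain u where "\<exists>x\<in>v ` {..card B}. u x \<noteq> 0" "(\<Sum>x\<in>v ` {..card B}. scale (u x) x) = 0"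
    using dependent_finite by blast
  then show ?thesis
    using that[of "u \<circ> v"] sum.reindex[OF True, of "\<lambda>x. scale (u x) x"] by auto
next
  case False
  then obtain i j where ij: "i \<le> card B" "j \<le> card B" "i \<noteq> j" "v i = v j"
    by (auto simp: inj_on_def)
  let ?c = "\<lambda>l. (if l = i then 1 else 0) - (if l = j then 1 else (0 :: 'a))"
  show ?thesis
  proof (rule that[of ?c])
    show "\<exists>l\<le>card B. ?c l \<noteq> 0"
      using ij(1,3) by auto
    have "scale (?c l) (v l) = (if l = i then v l else 0) - (if l = j then v l else 0)" for l
      by (simp add: scale_left_diff_distrib)
    then have "(\<Sum>l\<le>card B. scale (?c l) (v l)) = v i - v j"
      using ij(1,2) by (simp add: sum_subtractf)
    then show "(\<Sum>l\<le>card B. scale (?c l) (v l)) = 0"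
      using ij(4) by simp
  qed
qed

end

locale linear_endo = vector_space scale
  for scale :: "'k::field \<Rightarrow> 'v::ab_group_add \<Rightarrow> 'v" +
  fixes \<phi> :: "'v \<Rightarrow> 'v"
  assumes linear_endo: "Vector_Spaces.linear scale scale \<phi>"
begin

sublocale vector_space_pair scale scale ..

lemma linear_funpow: "Vector_Spaces.linear scale scale (\<phi> ^^ k)"
proof (induction k)
  case 0
  show ?case
    unfolding funpow.simps(1) by (rule linear_id)
next
  case (Suc k)
  show ?case
    unfolding funpow.simps(2) using Suc linear_endo by (rule Vector_Spaces.linear_compose)
qed

lemmas linear_endo_simps [simp] =
  linear_0[OF linear_endo] linear_add[OF linear_endo] linear_scale[OF linear_endo]
  linear_sum[OF linear_endo]
  linear_0[OF linear_funpow] linear_add[OF linear_funpow] linear_scale[OF linear_funpow]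
  linear_diff[OF linear_funpow] linear_sum[OF linear_funpow]

lemma linear_poly_endo: "Vector_Spaces.linear scale scale (poly_endo scale p \<phi>)"
  unfolding poly_endo_def[abs_def]
  by (intro linear_compose_sum ballI linear_compose_scale_right linear_funpow)

lemma poly_endo_funpow_commute:
  "poly_endo scale p \<phi> ((\<phi> ^^ j) v) = (\<phi> ^^ j) (poly_endo scale p \<phi> v)"
proof -
  have "(\<phi> ^^ i) ((\<phi> ^^ j) v) = (\<phi> ^^ j) ((\<phi> ^^ i) v)" for i
    by (metis add.commute comp_apply funpow_add)
  then show ?thesis
    unfolding poly_endo_def by simp
qed

lemma poly_endo_kernel:
  assumes "\<phi> z = 0"
  shows "poly_endo scale p \<phi> z = scale (coeff p 0) z"
proof -
  have "(\<phi> ^^ Suc i) z = 0" for i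
    using assms by (simp add: funpow_swap1)
  then show ?thesis
    unfolding poly_endo_def by (subst sum.atMost_shift) simp_all
qed

lemma poly_endo_nilpotent_eq_0:
  assumes "(\<phi> ^^ n) u = 0" "poly_endo scale p \<phi> u = 0" "coeff p 0 \<noteq> 0"
  shows "u = 0"
  using assms(1)
proof (induction n)
  case (Suc n)
  let ?z = "(\<phi> ^^ n) u"
  have "\<phi> ?z = 0"
    using Suc.prems by (simp add: funpow_swap1)
  then have "scale (coeff p 0) ?z = poly_endo scale p \<phi> ?z"
    by (simp add: poly_endo_kernel)
  also have "\<dots> = 0"
    using assms(2) by (simp add: poly_endo_funpow_commute)
  finally show ?case
    using assms(3) Suc.IH by simp
qed simp

lemma W_part_iff:
  "v \<in> W_part scale \<phi> \<longleftrightarrow> (\<exists>p. coeff p 0 \<noteq> 0 \<and> poly_endo scale p \<phi> v = 0)"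
  by (simp add: W_part_def coprime_x_iff_coeff_0)

lemma relation_imp_W_part:
  assumes "c 0 \<noteq> 0" "(\<Sum>i\<le>D. scale (c i) ((\<phi> ^^ i) v)) = 0"
  shows "v \<in> W_part scale \<phi>"
proof -
  define p where "p = Poly (map c [0..<Suc D])"
  have coeff_p: "coeff p i = (if i \<le> D then c i else 0)" for i
    by (auto simp: p_def nth_default_def simp del: upt_Suc)
  have "degree p \<le> D"
    by (rule degree_le) (simp add: coeff_p)
  then have "poly_endo scale p \<phi> v = (\<Sum>i\<le>D. scale (coeff p i) ((\<phi> ^^ i) v))"
    unfolding poly_endo_def by (intro sum.mono_neutral_left) (auto simp: coeff_eq_0)
  then have "poly_endo scale p \<phi> v = 0"
    using assms(2) by (simp add: coeff_p)
  moreover have "coeff p 0 \<noteq> 0"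
    using assms(1) by (simp add: coeff_p)
  ultimately show ?thesis
    unfolding W_part_iff by blast
qed

lemma ex_stable_range:
  assumes "finite B" "span B = range (\<phi> ^^ n)"
  obtains M where "range (\<phi> ^^ Suc M) = range (\<phi> ^^ M)" "range (\<phi> ^^ M) \<subseteq> span B"
proof -
  have "\<exists>k. range (\<phi> ^^ (n + Suc k)) = range (\<phi> ^^ (n + k))"
  proof (rule decreasing_subspace_chain_stabilizes[OF assms(1)])
    show "range (\<phi> ^^ (n + 0)) \<subseteq> span B"
      using assms(2) by simp
    show "subspace (range (\<phi> ^^ (n + k)))" for k
      by (rule linear_subspace_image[OF linear_funpow subspace_UNIV])
    show "range (\<phi> ^^ (n + Suc k)) \<subseteq> range (\<phi> ^^ (n + k))" for k
      using range_funpow_Suc_subset[where f = \<phi> and n = "n + k"] by simp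
  qed
  then obtain k where "range (\<phi> ^^ Suc (n + k)) = range (\<phi> ^^ (n + k))"
    by auto
  moreover have "range (\<phi> ^^ (n + k)) \<subseteq> span B"
    using assms(2) by (auto simp: funpow_add)
  ultimately show ?thesis
    using that by blast
qed

end

locale fitting_exponent = linear_endo +
  fixes M :: nat and B
  assumes finite_B: "finite B"
    and core_finite_dim: "range (\<phi> ^^ M) \<subseteq> span B"
    and range_stable: "range (\<phi> ^^ Suc M) = range (\<phi> ^^ M)"
begin

abbreviation core where
  "core \<equiv> range (\<phi> ^^ M)"

abbreviation nilspace where
  "nilspace \<equiv> {v. (\<phi> ^^ M) v = 0}"

lemma subspace_core: "subspace core"
  by (rule linear_subspace_image[OF linear_funpow subspace_UNIV])

lemma image_core: "\<phi> ` core = core"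
  using range_stable by (simp add: image_comp)

lemma funpow_image_core: "(\<phi> ^^ j) ` core = core"
proof (induction j)
  case (Suc j)
  have "(\<phi> ^^ Suc j) ` core = \<phi> ` (\<phi> ^^ j) ` core"
    by (simp add: image_comp)
  then show ?case
    using Suc.IH image_core by simp
qed simp

lemma funpow_in_core: "w \<in> core \<Longrightarrow> (\<phi> ^^ j) w \<in> core"
  using funpow_image_core by blast

lemma inj_on_core: "inj_on \<phi> core"
  using linear_endo finite_B core_finite_dim subspace_core image_core
  by (rule inj_on_if_linear_image_eq)

lemma inj_on_funpow_core: "inj_on (\<phi> ^^ j) core"
proof (induction j)
  case (Suc j)
  show ?case
    unfolding funpow.simps(2) using Suc.IH
    by (rule comp_inj_on) (simp add: funpow_image_core inj_on_core)
qed simp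

lemma core_funpow_eq_0:
  assumes "w \<in> core" "(\<phi> ^^ j) w = 0"
  shows "w = 0"
proof -
  have "(\<phi> ^^ j) w = (\<phi> ^^ j) 0"
    using assms(2) by simp
  then show ?thesis
    using inj_onD[OF inj_on_funpow_core] assms(1) subspace_0[OF subspace_core] by blast
qed

lemma fitting_decomposition:
  obtains u w where "v = u + w" "u \<in> nilspace" "w \<in> core"
proof -
  have "(\<phi> ^^ M) v \<in> (\<phi> ^^ M) ` core"
    unfolding funpow_image_core by (rule rangeI)
  then obtain w where w: "(\<phi> ^^ M) v = (\<phi> ^^ M) w" "w \<in> core"
    by (rule imageE)
  show ?thesis
  proof (rule that)
    show "v = (v - w) + w" "w \<in> core"
      using w(2) by simp_all
    show "v - w \<in> nilspace"
      using w(1) by simp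
  qed
qed

lemma U_part_eq: "U_part \<phi> = nilspace"
proof
  show "nilspace \<subseteq> U_part \<phi>"
    by (auto simp: U_part_def)
  show "U_part \<phi> \<subseteq> nilspace"
  proof
    fix v assume "v \<in> U_part \<phi>"
    then obtain m where m: "(\<phi> ^^ m) v = 0"
      by (auto simp: U_part_def)
    obtain u w where uw: "v = u + w" "u \<in> nilspace" "w \<in> core"
      by (rule fitting_decomposition)
    have "(\<phi> ^^ (m + M)) v = (\<phi> ^^ M) ((\<phi> ^^ m) v)"
      by (metis add.commute comp_apply funpow_add)
    then have "(\<phi> ^^ (m + M)) v = 0"
      using m by simp
    moreover have "(\<phi> ^^ (m + M)) u = 0"
      using uw(2) by (simp add: funpow_add)
    moreover have "(\<phi> ^^ (m + M)) w = (\<phi> ^^ (m + M)) v - (\<phi> ^^ (m + M)) u"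
      using uw(1) by simp
    ultimately have "(\<phi> ^^ (m + M)) w = 0"
      by simp
    then have "w = 0"
      using core_funpow_eq_0 uw(3) by blast
    then show "v \<in> nilspace"
      using uw(1,2) by simp
  qed
qed

lemma W_part_subset_core: "W_part scale \<phi> \<subseteq> core"
proof
  fix v assume "v \<in> W_part scale \<phi>"
  then obtain p where p: "coeff p 0 \<noteq> 0" "poly_endo scale p \<phi> v = 0"
    by (auto simp: W_part_iff)
  interpret p: Vector_Spaces.linear scale scale "poly_endo scale p \<phi>"
    by (rule linear_poly_endo)
  obtain u w where uw: "v = u + w" "u \<in> nilspace" "w \<in> core"
    by (rule fitting_decomposition)
  have "poly_endo scale p \<phi> w \<in> core"
    using uw(3) poly_endo_funpow_commute by auto
  moreover have "poly_endo scale p \<phi> u = - poly_endo scale p \<phi> w"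
    using p(2) uw(1) by (simp add: p.add eq_neg_iff_add_eq_0)
  ultimately have "poly_endo scale p \<phi> u \<in> core"
    using subspace_neg[OF subspace_core] by simp
  moreover have "(\<phi> ^^ M) (poly_endo scale p \<phi> u) = 0"
    using uw(2) by (simp add: poly_endo_funpow_commute[symmetric])
  ultimately have "poly_endo scale p \<phi> u = 0"
    by (rule core_funpow_eq_0)
  then have "u = 0"
    using poly_endo_nilpotent_eq_0 uw(2) p(1) by blast
  then show "v \<in> core"
    using uw by simp
qed

lemma core_relation_imp_W_part:
  assumes "w \<in> core" "(\<Sum>i\<le>D. scale (c i) ((\<phi> ^^ i) w)) = 0" "\<exists>i\<le>D. c i \<noteq> 0"
  shows "w \<in> W_part scale \<phi>"
  using assms(2,3)
proof (induction D arbitrary: c)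
  case 0
  then show ?case
    using relation_imp_W_part[where D = 0] by auto
next
  case (Suc D)
  show ?case
  proof (cases "c 0 = 0")
    case False
    then show ?thesis
      using relation_imp_W_part Suc.prems(1) by blast
  next
    case True
    let ?s = "\<Sum>i\<le>D. scale (c (Suc i)) ((\<phi> ^^ i) w)"
    have "\<phi> ?s = (\<Sum>i\<le>Suc D. scale (c i) ((\<phi> ^^ i) w))"
      unfolding sum.atMost_Suc_shift using True by simp
    then have "\<phi> ?s = 0"
      using Suc.prems(1) by simp
    moreover have "?s \<in> core"
      using assms(1)
      by (intro subspace_sum[OF subspace_core] subspace_scale[OF subspace_core] funpow_in_core)
    ultimately have "?s = 0"
      using core_funpow_eq_0[of _ 1] by simp
    moreover obtain i where "i \<le> Suc D" "c i \<noteq> 0"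
      using Suc.prems(2) by blast
    then have "\<exists>i\<le>D. c (Suc i) \<noteq> 0"
      using True by (cases i) auto
    ultimately show ?thesis
      by (rule Suc.IH[of "\<lambda>i. c (Suc i)"])
  qed
qed

lemma core_subset_W_part: "core \<subseteq> W_part scale \<phi>"
proof
  fix w assume "w \<in> core"
  then have in_span: "i \<le> card B \<Longrightarrow> (\<phi> ^^ i) w \<in> span B" for i
    using funpow_in_core core_finite_dim by blast
  obtain c where "\<exists>i\<le>card B. c i \<noteq> 0" "(\<Sum>i\<le>card B. scale (c i) ((\<phi> ^^ i) w)) = 0"
    using nontrivial_relation_if_finite_span[where v = "\<lambda>i. (\<phi> ^^ i) w", OF finite_B in_span]
    by blast
  then show "w \<in> W_part scale \<phi>"
    using core_relation_imp_W_part[OF \<open>w \<in> core\<close>] by blast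
qed

lemma W_part_eq: "W_part scale \<phi> = core"
  using W_part_subset_core core_subset_W_part by blast

lemma fp_index_nilspace: "u \<in> nilspace \<Longrightarrow> (\<phi> ^^ fp_index \<phi>) u = 0"
  using LeastI[of "\<lambda>n. \<forall>v\<in>U_part \<phi>. (\<phi> ^^ n) v = 0" M]
  unfolding fp_index_def U_part_eq by simp

lemma range_funpow_eq_core:
  assumes "\<And>u. u \<in> nilspace \<Longrightarrow> (\<phi> ^^ r) u = 0"
  shows "range (\<phi> ^^ r) = core"
proof
  show "core \<subseteq> range (\<phi> ^^ r)"
    using funpow_image_core[of r] by blast
  show "range (\<phi> ^^ r) \<subseteq> core"
  proof
    fix y assume "y \<in> range (\<phi> ^^ r)"
    then obtain v where "y = (\<phi> ^^ r) v"
      by blast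
    moreover obtain u w where "v = u + w" "u \<in> nilspace" "w \<in> core"
      by (rule fitting_decomposition)
    ultimately show "y \<in> core"
      using assms funpow_in_core by simp
  qed
qed

lemma kernel_funpow_eq_nilspace:
  assumes "\<And>u. u \<in> nilspace \<Longrightarrow> (\<phi> ^^ r) u = 0"
  shows "(\<phi> ^^ r) v = 0 \<longleftrightarrow> v \<in> nilspace"
proof
  assume "(\<phi> ^^ r) v = 0"
  obtain u w where uw: "v = u + w" "u \<in> nilspace" "w \<in> core"
    by (rule fitting_decomposition)
  then have "(\<phi> ^^ r) w = 0"
    using assms \<open>(\<phi> ^^ r) v = 0\<close> by simp
  then have "w = 0"
    using core_funpow_eq_0 uw(3) by blast
  then show "v \<in> nilspace"
    using uw by simp
qed (rule assms)

lemma G_Drazin_inverseD: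
  assumes "Vector_Spaces.linear scale scale \<psi>" "G_Drazin_inverse \<phi> \<psi>"
  shows "\<psi> ` core \<subseteq> core" and "\<psi> ` nilspace \<subseteq> nilspace"
    and "w \<in> core \<Longrightarrow> \<psi> (\<phi> w) = w" and "w \<in> core \<Longrightarrow> \<phi> (\<psi> w) = w"
    and "\<phi> (\<psi> (\<phi> v)) = \<phi> v"
proof -
  interpret \<psi>: Vector_Spaces.linear scale scale \<psi>
    by fact
  let ?r = "fp_index \<phi>"
  have inner: "\<phi> (\<psi> (\<phi> x)) = \<phi> x" for x
    using assms(2) unfolding G_Drazin_inverse_def by (simp add: fun_eq_iff)
  have commute: "\<psi> ((\<phi> ^^ ?r) x) = (\<phi> ^^ ?r) (\<psi> x)" for x
    using assms(2) unfolding G_Drazin_inverse_def by (simp add: fun_eq_iff)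
  note range_r = range_funpow_eq_core[OF fp_index_nilspace]
  note kernel_r = kernel_funpow_eq_nilspace[OF fp_index_nilspace]
  show psi_core: "\<psi> ` core \<subseteq> core"
  proof
    fix y assume "y \<in> \<psi> ` core"
    then obtain w where "w \<in> range (\<phi> ^^ ?r)" "y = \<psi> w"
      using range_r by blast
    then obtain x where "y = (\<phi> ^^ ?r) (\<psi> x)"
      using commute by auto
    then have "y \<in> range (\<phi> ^^ ?r)"
      by simp
    then show "y \<in> core"
      using range_r by simp
  qed
  show "\<psi> ` nilspace \<subseteq> nilspace"
  proof
    fix y assume "y \<in> \<psi> ` nilspace"
    then obtain u where "y = \<psi> u" "u \<in> nilspace"
      by blast
    then have "(\<phi> ^^ ?r) y = 0"
      using commute[of u] fp_index_nilspace by simp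
    then show "y \<in> nilspace"
      using kernel_r by blast
  qed
  show "\<phi> (\<psi> (\<phi> v)) = \<phi> v"
    by (rule inner)
  show "\<psi> (\<phi> w) = w" if "w \<in> core"
  proof (rule inj_onD[OF inj_on_core inner])
    have "\<phi> w \<in> core"
      using funpow_in_core[OF that, of 1] by simp
    then show "\<psi> (\<phi> w) \<in> core"
      by (rule subsetD[OF psi_core imageI])
  qed (rule that)
  show "\<phi> (\<psi> w) = w" if "w \<in> core"
  proof -
    have "w \<in> \<phi> ` core"
      using image_core that by simp
    then obtain w' where "w = \<phi> w'"
      by blast
    then show ?thesis
      using inner by simp
  qed
qed

lemma G_Drazin_inverseI:
  assumes "Vector_Spaces.linear scale scale \<psi>" and "\<psi> ` nilspace \<subseteq> nilspace"
    and "\<And>w. w \<in> core \<Longrightarrow> \<psi> (\<phi> w) = w" and "\<And>w. w \<in> core \<Longrightarrow> \<phi> (\<psi> w) = w"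
    and "\<And>u. u \<in> nilspace \<Longrightarrow> \<phi> (\<psi> (\<phi> u)) = \<phi> u"
  shows "G_Drazin_inverse \<phi> \<psi>"
proof -
  interpret \<psi>: Vector_Spaces.linear scale scale \<psi>
    by fact
  let ?r = "fp_index \<phi>"
  have inner: "\<phi> (\<psi> (\<phi> v)) = \<phi> v" for v
  proof -
    obtain u w where "v = u + w" "u \<in> nilspace" "w \<in> core"
      by (rule fitting_decomposition)
    then show ?thesis
      using assms(3,5) by (simp add: \<psi>.add)
  qed
  have commute: "\<psi> ((\<phi> ^^ ?r) v) = (\<phi> ^^ ?r) (\<psi> v)" for v
  proof -
    obtain u w where uw: "v = u + w" "u \<in> nilspace" "w \<in> core"
      by (rule fitting_decomposition)
    have "\<psi> ((\<phi> ^^ ?r) v) = \<psi> ((\<phi> ^^ ?r) w)"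
      using uw(1,2) fp_index_nilspace by simp
    also have "\<dots> = (\<phi> ^^ ?r) (\<psi> w)"
      using image_core assms(3,4) uw(3) by (intro funpow_commute_on[of \<phi> core]) auto
    also have "\<dots> = (\<phi> ^^ ?r) (\<psi> v)"
      using uw(1,2) assms(2) fp_index_nilspace by (auto simp: \<psi>.add)
    finally show ?thesis .
  qed
  show ?thesis
    unfolding G_Drazin_inverse_def using inner commute by auto
qed

end

theorem proposition3p4:
  fixes scale :: "'k::field \<Rightarrow> 'v::ab_group_add \<Rightarrow> 'v"
    and \<phi> \<psi> :: "'v \<Rightarrow> 'v"
  assumes "vector_space scale"
    and "finite_potent scale \<phi>"
    and "Vector_Spaces.linear scale scale \<psi>"
  shows "G_Drazin_inverse \<phi> \<psi> \<longleftrightarrow>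
    (\<psi> ` W_part scale \<phi> \<subseteq> W_part scale \<phi> \<and> \<psi> ` U_part \<phi> \<subseteq> U_part \<phi> \<and>
     (\<forall>w\<in>W_part scale \<phi>. \<psi> (\<phi> w) = w \<and> \<phi> (\<psi> w) = w) \<and>
     (\<forall>u\<in>U_part \<phi>. \<phi> (\<psi> (\<phi> u)) = \<phi> u))"
proof -
  obtain n B where linear: "Vector_Spaces.linear scale scale \<phi>"
    and B: "finite B" "module.span scale B = range (\<phi> ^^ n)"
    using assms(2) unfolding finite_potent_def by blast
  interpret linear_endo scale \<phi>
    using assms(1) linear by (intro linear_endo.intro linear_endo_axioms.intro)
  obtain M where "range (\<phi> ^^ Suc M) = range (\<phi> ^^ M)" "range (\<phi> ^^ M) \<subseteq> span B"
    using ex_stable_range[OF B] .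
  then interpret fitting_exponent scale \<phi> M B
    using B(1) by unfold_locales
  show ?thesis
    unfolding U_part_eq W_part_eq
    using G_Drazin_inverseD[OF assms(3)] G_Drazin_inverseI[OF assms(3)] by blast
qed

end
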